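(* Let $\psi\in\mathcal C$, let $F_1,F_2:\mathbb R\to(0,\infty)$ be measurable with $I(F_1\circ\psi,\psi),I(F_2\circ\psi^*,\psi^* )\in(0,\infty)$, and assume $F_2\circ\psi^*\in\mathcal L_{\psi^*}$. Then for $p\in(0,\infty)$ and $f=e^{-\psi}$, $$G_{p,F_1,F_2}(\psi)\le[I(F_1\circ\psi,\psi)]^{\frac{n}{n+p}}[I(F_2\circ\psi^*,\psi^* )]^{\frac{p}{n+p}},\qquad G_p(f)\le[I(f)]^{\frac{n}{n+p}}[I(f^\circ)]^{\frac{p}{n+p}}.$$ For $p\in(-\infty,-n)\cup(-n,0)$ the same inequalities hold with $\le$ replaced by $\ge$.
   Context: $\mathcal C$ is the set of convex $\psi:\mathbb R^n\to\mathbb R\cup\{+\infty\}$ with domain of nonempty interior; $\psi^*(y)=\sup_x(\langle x,y\rangle-\psi(x))$; $\nabla^2\psi$ is the Alexandrov Hessian; $X_\psi=\{x:\psi(x)<\infty,\ \nabla^2\psi(x)\text{ exists and is invertible}\}$. $I(F\circ\psi,\psi)=\int_{X_\psi}F(\psi(x))dx$, $I(g,\psi^* )=\int_{X_{\psi^*}}g$; $\mathcal F^+_{\psi^*}$: integrable $g>0$ on $X_{\psi^*}$ with $0<I(g,\psi^* )<\infty$; $\mathcal L_{\psi^*}$: its log-concave members. For $-n\ne p\in\mathbb R$ and $g\in\mathcal F^+_{\psi^*}$, $V_{p,F_1,F_2}(\psi,g)=\int_{X_\psi}\big(\frac{F_2(\langle x,\nabla\psi(x)\rangle-\psi(x))}{g(\nabla\psi(x))}\big)^{p/n}F_1(\psi(x))dx$.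 The general $L_p$ geominimal surface area is $G_{p,F_1,F_2}(\psi)=\inf_{g\in\mathcal L_{\psi^*}}\{V_{p,F_1,F_2}(\psi,g)^{\frac{n}{n+p}}I(g,\psi^* )^{\frac{p}{n+p}}\}$ for $p\ge0$, and the same with $\sup$ for $-n\ne p<0$. For $f=e^{-\psi}$: $G_p(f)=G_{p,e^{-t},e^{-t}}(\psi)$, $f^\circ=e^{-\psi^*}$, $I(f)=\int_{X_\psi}f$, $I(f^\circ)=\int_{X_{\psi^*}}f^\circ$ (assumed in $(0,\infty)$). Standing assumption: all integrals are well defined. *)

theory Defs
  imports "HOL-Analysis.Analysis"
begin

text \<open>Convex functions with values in R extended by +infinity are modelled as
  functions into ereal that never take the value -infinity.\<close>

definition effdom :: "('a::real_vector \<Rightarrow> ereal) \<Rightarrow> 'a set" where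
  "effdom psi = {x. psi x < \<infinity>}"

definition psi_r :: "('a \<Rightarrow> ereal) \<Rightarrow> 'a \<Rightarrow> real" where
  "psi_r psi x = real_of_ereal (psi x)"

definition convC :: "(real^'n \<Rightarrow> ereal) set" where
  "convC = {psi. (\<forall>x. psi x \<noteq> -\<infinity>) \<and> convex (effdom psi)
              \<and> convex_on (effdom psi) (psi_r psi) \<and> interior (effdom psi) \<noteq> {}}"

definition legendre :: "(real^'n \<Rightarrow> ereal) \<Rightarrow> real^'n \<Rightarrow> ereal" where
  "legendre psi y = (SUP x. ereal (x \<bullet> y) - psi x)"

definition grad :: "(real^'n \<Rightarrow> ereal) \<Rightarrow> real^'n \<Rightarrow> real^'n" where
  "grad psi x = (SOME v. (psi_r psi has_derivative (\<lambda>h. v \<bullet> h)) (at x))"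

definition alex_hessian :: "(real^'n \<Rightarrow> ereal) \<Rightarrow> real^'n \<Rightarrow> real^'n^'n \<Rightarrow> bool" where
  "alex_hessian psi x A \<longleftrightarrow> x \<in> interior (effdom psi) \<and> transpose A = A \<and>
     (\<exists>v. (psi_r psi has_derivative (\<lambda>h. v \<bullet> h)) (at x) \<and>
        ((\<lambda>h. (psi_r psi (x + h) - psi_r psi x - v \<bullet> h - (1/2) * (h \<bullet> (A *v h)))
               / (norm h)\<^sup>2) \<longlongrightarrow> 0) (at 0))"

definition Xset :: "(real^'n \<Rightarrow> ereal) \<Rightarrow> (real^'n) set" where
  "Xset psi = {x. psi x < \<infinity> \<and> (\<exists>A. alex_hessian psi x A \<and> invertible A)}"

definition Iint :: "(real^'n \<Rightarrow> real) \<Rightarrow> (real^'n \<Rightarrow> ereal) \<Rightarrow> real" where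
  "Iint g psi = (LINT x:Xset psi|lebesgue. g x)"

text \<open>"I(g,psi) is finite and positive": g integrable on X_psi with positive integral.\<close>
definition Ipos :: "(real^'n \<Rightarrow> real) \<Rightarrow> (real^'n \<Rightarrow> ereal) \<Rightarrow> bool" where
  "Ipos g psi \<longleftrightarrow> set_integrable lebesgue (Xset psi) g \<and> 0 < Iint g psi"

definition Fplus :: "(real^'n \<Rightarrow> ereal) \<Rightarrow> (real^'n \<Rightarrow> real) set" where
  "Fplus phi = {g. (\<forall>y\<in>Xset phi. 0 < g y) \<and> Ipos g phi}"

definition log_concave :: "('a::real_vector \<Rightarrow> real) \<Rightarrow> bool" where
  "log_concave h \<longleftrightarrow> (\<forall>x. 0 \<le> h x) \<and>
     (\<forall>x y t. 0 < t \<and> t < 1 \<longrightarrow> h x powr t * h y powr (1 - t) \<le> h (t *\<^sub>R x + (1 - t) *\<^sub>R y))"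

definition Lclass :: "(real^'n \<Rightarrow> ereal) \<Rightarrow> (real^'n \<Rightarrow> real) set" where
  "Lclass phi = {g. g \<in> Fplus phi \<and> (\<exists>h. log_concave h \<and> (\<forall>y\<in>Xset phi. h y = g y))}"

definition Vp :: "real \<Rightarrow> (real \<Rightarrow> real) \<Rightarrow> (real \<Rightarrow> real) \<Rightarrow> (real^'n \<Rightarrow> ereal)
                    \<Rightarrow> (real^'n \<Rightarrow> real) \<Rightarrow> real" where
  "Vp p F1 F2 psi g = (LINT x:Xset psi|lebesgue.
      (F2 (x \<bullet> grad psi x - psi_r psi x) / g (grad psi x)) powr (p / real CARD('n))
      * F1 (psi_r psi x))"

definition Ggen :: "real \<Rightarrow> (real \<Rightarrow> real) \<Rightarrow> (real \<Rightarrow> real) \<Rightarrow> (real^'n \<Rightarrow> ereal) \<Rightarrow> ereal" where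
  "Ggen p F1 F2 psi =
     (let n = real CARD('n);
          val = (\<lambda>g. ereal (Vp p F1 F2 psi g powr (n / (n + p))
                             * Iint g (legendre psi) powr (p / (n + p))))
      in if 0 \<le> p then (INF g\<in>Lclass (legendre psi). val g)
         else (SUP g\<in>Lclass (legendre psi). val g))"

text \<open>G_p(f) for f = exp(-psi).\<close>
definition Gp_f :: "real \<Rightarrow> (real^'n \<Rightarrow> ereal) \<Rightarrow> ereal" where
  "Gp_f p psi = Ggen p (\<lambda>t. exp (- t)) (\<lambda>t. exp (- t)) psi"

end

theory Submission
  imports Defs
begin

text \<open>The function \<open>g = F\<^sub>2 \<circ> \<psi>\<^sup>*\<close> is itself admissible in the infimum (supremum)
  defining \<open>G\<^sub>p\<^sub>,\<^sub>F\<^sub>1\<^sub>,\<^sub>F\<^sub>2\<close>, and for it the mixed volume collapses: at every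
  \<open>x \<in> X\<^sub>\<psi>\<close> the tangent inequality of the convex function \<open>\<psi>\<close> gives equality in
  Fenchel--Young, \<open>\<psi>\<^sup>*(\<nabla>\<psi>(x)) = \<langle>x, \<nabla>\<psi>(x)\<rangle> - \<psi>(x)\<close>, so the integrand of
  \<open>V\<^sub>p(\<psi>, g)\<close> reduces to \<open>F\<^sub>1(\<psi>(x))\<close> and \<open>V\<^sub>p(\<psi>, g) = I(F\<^sub>1 \<circ> \<psi>, \<psi>)\<close>.
  The value at \<open>g\<close> is therefore exactly the claimed bound. For \<open>f = e\<^sup>-\<^sup>\<psi>\<close> take
  \<open>F\<^sub>1 = F\<^sub>2 = e\<^sup>-\<^sup>t\<close>; admissibility of \<open>e\<^sup>-\<^sup>\<psi>\<^sup>*\<close> is log-concavity, which follows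
  from convexity of the Legendre transform.\<close>

lemma convex_on_above_tangent:
  fixes f :: "'a::real_normed_vector \<Rightarrow> real"
  assumes conv: "convex_on S f" and x: "x \<in> S" and z: "z \<in> S"
    and deriv: "(f has_derivative D) (at x)"
  shows "f x + D (z - x) \<le> f z"
proof -
  define g where "g t = f (x + t *\<^sub>R (z - x))" for t :: real
  have "linear D" using deriv by (rule has_derivative_linear)
  have line: "((\<lambda>t. x + t *\<^sub>R (z - x)) has_derivative (\<lambda>t. t *\<^sub>R (z - x))) (at 0)"
    by (auto intro!: derivative_eq_intros)
  have "(g has_derivative (D \<circ> (\<lambda>t. t *\<^sub>R (z - x)))) (at 0)"
    unfolding g_def using diff_chain_at[OF line] deriv by (simp add: o_def)
  moreover have "D \<circ> (\<lambda>t. t *\<^sub>R (z - x)) = (*) (D (z - x))"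
    using \<open>linear D\<close> by (auto simp: o_def linear_scale)
  ultimately have "(g has_field_derivative D (z - x)) (at 0)"
    by (simp add: has_field_derivative_def)
  hence "((\<lambda>t. (g t - g 0) / t) \<longlongrightarrow> D (z - x)) (at_right 0)"
    by (auto simp: DERIV_def intro: tendsto_mono[OF at_le])
  moreover have "\<forall>\<^sub>F t in at_right 0. (g t - g 0) / t \<le> f z - f x"
  proof (rule eventually_mono)
    show "\<forall>\<^sub>F t in at_right (0::real). t \<in> {0<..<1}"
      by (rule eventually_at_right_real) simp
  next
    fix t :: real assume t: "t \<in> {0<..<1}"
    have "x + t *\<^sub>R (z - x) = (1 - t) *\<^sub>R x + t *\<^sub>R z" by (simp add: algebra_simps)
    hence "g t \<le> (1 - t) * f x + t * f z"
      using convex_onD[OF conv, of t x z] t x z by (simp add: g_def)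
    thus "(g t - g 0) / t \<le> f z - f x" using t by (simp add: g_def divide_simps algebra_simps)
  qed
  ultimately have "D (z - x) \<le> f z - f x"
    by (rule tendsto_upperbound) simp
  thus ?thesis by simp
qed

lemma fenchel_young: "ereal (x \<bullet> y) - psi x \<le> legendre psi y"
  unfolding legendre_def by (rule SUP_upper) simp

lemma legendre_convex:
  assumes "0 \<le> t" "t \<le> 1" and "legendre psi a = ereal ra" and "legendre psi b = ereal rb"
  shows "legendre psi ((1 - t) *\<^sub>R a + t *\<^sub>R b) \<le> ereal ((1 - t) * ra + t * rb)"
  unfolding legendre_def
proof (rule SUP_least)
  fix z
  show "ereal (z \<bullet> ((1 - t) *\<^sub>R a + t *\<^sub>R b)) - psi z \<le> ereal ((1 - t) * ra + t * rb)"
  proof (cases "psi z")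
    case (real c)
    have "z \<bullet> a - c \<le> ra" "z \<bullet> b - c \<le> rb"
      using fenchel_young[of z a psi] fenchel_young[of z b psi] assms(3,4) real by simp_all
    hence "(1 - t) * (z \<bullet> a - c) + t * (z \<bullet> b - c) \<le> (1 - t) * ra + t * rb"
      using assms(1,2) by (intro add_mono mult_left_mono) auto
    thus ?thesis using real by (simp add: algebra_simps)
  next
    case MInf
    thus ?thesis using fenchel_young[of z a psi] assms(3) by simp
  qed simp
qed

lemma convC_finite_on_effdom:
  assumes "psi \<in> convC" and "x \<in> effdom psi"
  shows "psi x = ereal (psi_r psi x)"
  using assms unfolding convC_def effdom_def psi_r_def by (cases "psi x") auto

lemma legendre_not_MInf:
  assumes "psi \<in> convC"
  shows "legendre psi y \<noteq> -\<infinity>"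
proof -
  from assms have "interior (effdom psi) \<noteq> {}" unfolding convC_def by auto
  then obtain z where "z \<in> effdom psi" using interior_subset by blast
  hence "ereal (z \<bullet> y - psi_r psi z) \<le> legendre psi y"
    using fenchel_young[of z y psi] convC_finite_on_effdom[OF assms] by simp
  thus ?thesis by auto
qed

lemma legendre_grad:
  assumes C: "psi \<in> convC" and x: "x \<in> Xset psi"
  shows "legendre psi (grad psi x) = ereal (x \<bullet> grad psi x - psi_r psi x)"
proof -
  from x obtain A where "alex_hessian psi x A" unfolding Xset_def by auto
  then obtain v where "(psi_r psi has_derivative (\<lambda>h. v \<bullet> h)) (at x)"
    unfolding alex_hessian_def by auto
  hence deriv: "(psi_r psi has_derivative (\<lambda>h. grad psi x \<bullet> h)) (at x)"
    unfolding grad_def by (rule someI)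
  have x_dom: "x \<in> effdom psi" using x unfolding Xset_def effdom_def by auto
  have tangent: "z \<bullet> grad psi x - psi z \<le> ereal (x \<bullet> grad psi x - psi_r psi x)" for z
  proof (cases "z \<in> effdom psi")
    case True
    have "psi_r psi x + grad psi x \<bullet> (z - x) \<le> psi_r psi z"
      using C True x_dom deriv unfolding convC_def by (intro convex_on_above_tangent) auto
    thus ?thesis using convC_finite_on_effdom[OF C True] by (simp add: inner_diff_right inner_commute)
  qed (simp add: effdom_def)
  show ?thesis
    using fenchel_young[of x "grad psi x" psi] convC_finite_on_effdom[OF C x_dom] tangent
    unfolding legendre_def by (intro antisym SUP_least) simp_all
qed

lemma log_concave_exp_neg_convex:
  fixes phi :: "'a::real_vector \<Rightarrow> ereal"
  assumes not_MInf: "\<And>y. phi y \<noteq> -\<infinity>"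
    and convex: "\<And>a b t ra rb. 0 \<le> t \<Longrightarrow> t \<le> 1 \<Longrightarrow> phi a = ereal ra \<Longrightarrow> phi b = ereal rb
                 \<Longrightarrow> phi ((1 - t) *\<^sub>R a + t *\<^sub>R b) \<le> ereal ((1 - t) * ra + t * rb)"
  shows "log_concave (\<lambda>y. if phi y < \<infinity> then exp (- real_of_ereal (phi y)) else 0)"
    (is "log_concave ?h")
  unfolding log_concave_def
proof (intro conjI allI impI)
  fix x y :: 'a and t :: real
  assume t: "0 < t \<and> t < 1"
  show "?h x powr t * ?h y powr (1 - t) \<le> ?h (t *\<^sub>R x + (1 - t) *\<^sub>R y)"
  proof (cases "phi x < \<infinity> \<and> phi y < \<infinity>")
    case True
    then obtain rx ry where rx: "phi x = ereal rx" and ry: "phi y = ereal ry"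
      using not_MInf[of x] not_MInf[of y] by (cases "phi x"; cases "phi y") auto
    have "phi (t *\<^sub>R x + (1 - t) *\<^sub>R y) \<le> ereal (t * rx + (1 - t) * ry)"
      using convex[of "1 - t" x rx y ry] t rx ry by simp
    then obtain rw where rw: "phi (t *\<^sub>R x + (1 - t) *\<^sub>R y) = ereal rw"
      and "rw \<le> t * rx + (1 - t) * ry"
      using not_MInf[of "t *\<^sub>R x + (1 - t) *\<^sub>R y"]
      by (cases "phi (t *\<^sub>R x + (1 - t) *\<^sub>R y)") auto
    hence "exp (- (t * rx + (1 - t) * ry)) \<le> exp (- rw)" by simp
    thus ?thesis using rx ry rw by (simp add: powr_def exp_add[symmetric] algebra_simps)
  qed auto
qed simp

lemma exp_neg_legendre_in_Lclass:
  assumes C: "psi \<in> convC"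
    and I: "Ipos (\<lambda>y. exp (- real_of_ereal (legendre psi y))) (legendre psi)"
  shows "(\<lambda>y. exp (- real_of_ereal (legendre psi y))) \<in> Lclass (legendre psi)"
proof -
  \<comment> \<open>The witness vanishes off the domain of \<open>\<psi>\<^sup>*\<close>; there the junk value
    \<open>real_of_ereal \<infinity> = 0\<close> would make the function itself equal to 1.\<close>
  have "log_concave (\<lambda>y. if legendre psi y < \<infinity> then exp (- real_of_ereal (legendre psi y)) else 0)"
    using legendre_not_MInf[OF C] legendre_convex by (rule log_concave_exp_neg_convex)
  thus ?thesis
    using I unfolding Lclass_def Fplus_def Xset_def by (auto intro!: exI)
qed

lemma Vp_legendre_self:
  fixes psi :: "real^'n \<Rightarrow> ereal"
  assumes C: "psi \<in> convC" and F2: "\<forall>t. 0 < F2 t"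
  shows "Vp p F1 F2 psi (\<lambda>y. F2 (real_of_ereal (legendre psi y))) = Iint (\<lambda>x. F1 (psi_r psi x)) psi"
proof -
  have "(F2 (x \<bullet> grad psi x - psi_r psi x) / F2 (real_of_ereal (legendre psi (grad psi x))))
          powr (p / real CARD('n)) * F1 (psi_r psi x) = F1 (psi_r psi x)"
    if "x \<in> Xset psi" for x
    using legendre_grad[OF C that] F2 by (simp add: less_imp_neq[symmetric])
  thus ?thesis
    unfolding Vp_def Iint_def set_lebesgue_integral_def
    by (intro Bochner_Integration.integral_cong) (auto simp: indicator_def)
qed

lemma Ggen_bound_by_Lclass_member:
  fixes psi :: "real^'n \<Rightarrow> ereal" and p :: real and F1 F2 :: "real \<Rightarrow> real"
  assumes "g \<in> Lclass (legendre psi)"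
  defines "n \<equiv> real CARD('n)"
  defines "val \<equiv> ereal (Vp p F1 F2 psi g powr (n / (n + p)) * Iint g (legendre psi) powr (p / (n + p)))"
  shows "0 < p \<Longrightarrow> Ggen p F1 F2 psi \<le> val" and "p < 0 \<Longrightarrow> val \<le> Ggen p F1 F2 psi"
  using assms unfolding Ggen_def Let_def n_def val_def
  by (auto intro!: INF_lower2 SUP_upper2)

theorem proposition2p2:
  fixes psi :: "real^'n \<Rightarrow> ereal" and p :: real
  assumes "psi \<in> convC"
    and "p \<noteq> 0" and "p \<noteq> - real CARD('n)"
  shows
   "(\<forall>F1 F2 :: real \<Rightarrow> real.
       F1 \<in> borel_measurable borel \<and> F2 \<in> borel_measurable borel \<and>
       (\<forall>t. 0 < F1 t) \<and> (\<forall>t. 0 < F2 t) \<and>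
       Ipos (\<lambda>x. F1 (psi_r psi x)) psi \<and>
       Ipos (\<lambda>y. F2 (real_of_ereal (legendre psi y))) (legendre psi) \<and>
       (\<lambda>y. F2 (real_of_ereal (legendre psi y))) \<in> Lclass (legendre psi)
     \<longrightarrow>
       (let n = real CARD('n);
            B = ereal (Iint (\<lambda>x. F1 (psi_r psi x)) psi powr (n / (n + p))
                 * Iint (\<lambda>y. F2 (real_of_ereal (legendre psi y))) (legendre psi) powr (p / (n + p)))
        in (0 < p \<longrightarrow> Ggen p F1 F2 psi \<le> B) \<and> (p < 0 \<longrightarrow> B \<le> Ggen p F1 F2 psi)))
    \<and>
    (Ipos (\<lambda>x. exp (- psi_r psi x)) psi \<and>
     Ipos (\<lambda>y. exp (- real_of_ereal (legendre psi y))) (legendre psi)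
     \<longrightarrow>
       (let n = real CARD('n);
            B = ereal (Iint (\<lambda>x. exp (- psi_r psi x)) psi powr (n / (n + p))
                 * Iint (\<lambda>y. exp (- real_of_ereal (legendre psi y))) (legendre psi) powr (p / (n + p)))
        in (0 < p \<longrightarrow> Gp_f p psi \<le> B) \<and> (p < 0 \<longrightarrow> B \<le> Gp_f p psi)))"
proof (intro conjI allI impI, goal_cases)
  case (1 F1 F2)
  hence F2: "\<forall>t. 0 < F2 t" and L: "(\<lambda>y. F2 (real_of_ereal (legendre psi y))) \<in> Lclass (legendre psi)"
    by auto
  show ?case
    using Ggen_bound_by_Lclass_member[OF L, of p F1 F2] Vp_legendre_self[OF assms(1) F2, of p F1]
    by (simp add: Let_def)
next
  case 2
  hence L: "(\<lambda>y. exp (- real_of_ereal (legendre psi y))) \<in> Lclass (legendre psi)"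
    using exp_neg_legendre_in_Lclass[OF assms(1)] by blast
  have "Vp p (\<lambda>t. exp (- t)) (\<lambda>t. exp (- t)) psi (\<lambda>y. exp (- real_of_ereal (legendre psi y)))
      = Iint (\<lambda>x. exp (- psi_r psi x)) psi"
    using Vp_legendre_self[OF assms(1), of "\<lambda>t. exp (- t)"] by simp
  thus ?case
    using Ggen_bound_by_Lclass_member[OF L, of p "\<lambda>t. exp (- t)" "\<lambda>t. exp (- t)"]
    by (simp add: Gp_f_def Let_def)
qed

end
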